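(* Let $B=2^{k_1}C_1\perp\cdots\perp2^{k_r}C_r\in\mathcal H_n(\mathfrak o)$ be a pre-optimal form, $B_1=2^{k_1}C_1\perp\cdots\perp2^{k_{r-1}}C_{r-1}$, $n_1=\deg B_1$, $n_2=\deg C_r$. (1) Let $n_2=1$. (1.1) If $n_1$ is even, then $\Delta(B)-\Delta(B_1)=k_r+2$ if $\mathrm{ord}(\det B_1)$ is odd; $=k_r+1$ if $\mathrm{ord}(\det B_1)$ is even and $\xi_{B_1}=0$; $=k_r$ if $\xi_{B_1}\ne0$. (1.2) If $n_1$ is odd, then $\Delta(B)-\Delta(B_1)=k_r$ if $\mathrm{ord}(\det B)$ is odd; $=k_r+1$ if $\mathrm{ord}(\det B)$ is even and $\xi_B=0$; $=k_r+2$ if $\xi_B\ne0$. (2) If $n_2=2$ and $C_r$ is unimodular diagonal, then $\Delta(B)=\Delta(B_1)+2k_r+2$. (3) If $C_r\in\frac12(S_2(\mathfrak o)_e\cap GL_2(\mathfrak o))$, then $\Delta(B)=\Delta(B_1)+2k_r$.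
   Context: Let $F$ be a finite unramified extension of $\mathbb Q_2$ with ring of integers $\mathfrak o$, $\mathrm{ord}$ the valuation with $\mathrm{ord}(2)=1$, $\mathrm{ord}(0)=+\infty$. $\mathcal H_n(\mathfrak o)$ is the set of symmetric $B=(b_{ij})\in M_n(F)$ with $b_{ii}\in\mathfrak o$, $2b_{ij}\in\mathfrak o$. $\perp$ is block-diagonal sum. For nondegenerate $B$ of degree $n$: $D_B=(-4)^{[n/2]}\det B$; $\xi_B=1,-1,0$ according as $D_B\in F^{\times2}$, $F(\sqrt{D_B})/F$ unramified quadratic, or ramified; $\mathfrak D_B$ is the discriminant ideal of $F(\sqrt{D_B})/F$ (the unit ideal if $D_B$ is a square); $\Delta(B)=\mathrm{ord}(D_B)$ if $n$ is odd and $\Delta(B)=\mathrm{ord}(D_B)-\mathrm{ord}(\mathfrak D_B)+1-\xi_B^2$ if $n$ is even. For the empty matrix, $\det=1$, $\xi=1$, $\Delta=0$. $S_2(\mathfrak o)_e$: symmetric $2\times2$ matrices over $\mathfrak o$ with diagonal in $2\mathfrak o$; unimodular diagonal: diagonal with unit entries. Pre-optimal forms: $B=2^{k_1}C_1\perp\cdots\perp2^{k_r}C_r$ with $k_i\ge0$, each $C_i$ unimodular diagonal or in $\frac12(S_2(\mathfrak o)_e\cap GL_2(\mathfrak o))$; $B^{[j]}=2^{k_1}C_1\perp\cdots\perp2^{k_j}C_j$; $\mathcal D_m=\{j:k_j=m,C_j\text{ diagonal}\}$, $\mathcal E_m=\{j:k_j=m,C_j\text{ not diagonal}\}$. Pre-optimal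 means: (PO1) $\sum_{j\in\mathcal D_m}\deg C_j\le2$ and $\mathcal E_m$ is a (possibly empty) set of consecutive integers, for each $m$; (PO2) for $i<j$: $i\in\mathcal D_{m_1},j\in\mathcal D_{m_2}\Rightarrow m_1\le m_2$; $i\in\mathcal E_{m_1},j\in\mathcal E_{m_2}\Rightarrow m_1\le m_2$; $i\in\mathcal D_{m_1},j\in\mathcal E_{m_2}\Rightarrow m_1\le m_2-1$; $i\in\mathcal E_{m_1},j\in\mathcal D_{m_2}\Rightarrow m_1\le m_2+1$; (PO3) if $C_i$ is unimodular diagonal of degree 2 then $i\ge2$ and either ($\deg B^{[i]}$ even and $\xi_{B^{[i-1]}}=\xi_{B^{[i]}}=0$) or ($\deg B^{[i-1]}$ odd and $\mathrm{ord}\det B^{[i-1]}+k_i$ even); (PO4) if $k_i=k_{i-1}-1$, $C_i$ diagonal, $C_{i-1}$ not diagonal, then $\deg C_i=2$, or $\deg C_i=1$ and either ($\deg B^{[i]}$ and $\mathrm{ord}\det B^{[i]}$ even) or ($\deg B^{[i]}$ odd and $\xi_{B^{[i-1]}}=0$); (PO5) if $C_i$ diagonal, $C_{i+1}$ not diagonal, $k_i=k_{i+1}-1$, then $\deg C_i=1$ and either ($\deg B^{[i]}$ even and $\mathrm{ord}\det B^{[i]}$ odd) or ($\deg B^{[i]}$ odd and $\xi_{B^{[i-1]}}\ne0$ if $i\ge2$); (PO6) if $\deg B^{[i]}$ even, $C_i,C_{i+1}$ unimodular diagonal, $k_{i+1}=k_i+1$, then $\xi_{B^{[i]}}=0$.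 *)

theory Defs
  imports Main "Jordan_Normal_Form.Determinant"
begin

text \<open>F is modelled as a field of characteristic 0 (type class field_char_0) together
with a function ord : F \<Rightarrow> int (the value at 0 is irrelevant; ord 0 = +infinity is
encoded by always treating 0 separately). The predicate unram_ext_Q2 says: ord is a
discrete valuation, ord 2 = 1 (absolute ramification index 1), the residue field is
finite and F is complete. These are exactly the finite unramified extensions of Q_2.\<close>

definition integral :: "('a::field \<Rightarrow> int) \<Rightarrow> 'a \<Rightarrow> bool" where
  "integral ord x \<longleftrightarrow> x = 0 \<or> ord x \<ge> 0"

definition is_unit :: "('a::field \<Rightarrow> int) \<Rightarrow> 'a \<Rightarrow> bool" where
  "is_unit ord x \<longleftrightarrow> x \<noteq> 0 \<and> ord x = 0"

definition in_2o :: "('a::field \<Rightarrow> int) \<Rightarrow> 'a \<Rightarrow> bool" where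
  "in_2o ord x \<longleftrightarrow> x = 0 \<or> ord x \<ge> 1"

definition close :: "('a::field \<Rightarrow> int) \<Rightarrow> int \<Rightarrow> 'a \<Rightarrow> 'a \<Rightarrow> bool" where
  "close ord M x y \<longleftrightarrow> x = y \<or> ord (x - y) \<ge> M"

definition unram_ext_Q2 :: "('a::field_char_0 \<Rightarrow> int) \<Rightarrow> bool" where
  "unram_ext_Q2 ord \<longleftrightarrow>
     (\<forall>x y. x \<noteq> 0 \<longrightarrow> y \<noteq> 0 \<longrightarrow> ord (x * y) = ord x + ord y)
   \<and> (\<forall>x y. x \<noteq> 0 \<longrightarrow> y \<noteq> 0 \<longrightarrow> x + y \<noteq> 0 \<longrightarrow> ord (x + y) \<ge> min (ord x) (ord y))
   \<and> ord 2 = 1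
   \<and> (\<exists>S. finite S \<and> (\<forall>x. integral ord x \<longrightarrow> (\<exists>s\<in>S. in_2o ord (x - s))))
   \<and> (\<forall>s :: nat \<Rightarrow> 'a. (\<forall>M. \<exists>N. \<forall>m\<ge>N. \<forall>n\<ge>N. close ord M (s m) (s n))
          \<longrightarrow> (\<exists>L. \<forall>M. \<exists>N. \<forall>n\<ge>N. close ord M (s n) L))"

text \<open>Elements of F(sqrt D) (D a non-square) are pairs (a,b) standing for a + b sqrt D.\<close>

definition qmult :: "'a::field \<Rightarrow> 'a \<times> 'a \<Rightarrow> 'a \<times> 'a \<Rightarrow> 'a \<times> 'a" where
  "qmult D x y = (fst x * fst y + D * snd x * snd y, fst x * snd y + snd x * fst y)"

definition qtrace :: "'a::field \<Rightarrow> 'a \<times> 'a \<Rightarrow> 'a" where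
  "qtrace D x = 2 * fst x"

definition qnorm :: "'a::field \<Rightarrow> 'a \<times> 'a \<Rightarrow> 'a" where
  "qnorm D x = fst x ^ 2 - D * snd x ^ 2"

text \<open>x is integral over o iff its characteristic polynomial t^2 - Tr(x) t + N(x) has
coefficients in o.\<close>
definition qintegral :: "('a::field \<Rightarrow> int) \<Rightarrow> 'a \<Rightarrow> 'a \<times> 'a \<Rightarrow> bool" where
  "qintegral ord D x \<longleftrightarrow> integral ord (qtrace D x) \<and> integral ord (qnorm D x)"

definition qdisc :: "'a::field \<Rightarrow> 'a \<times> 'a \<Rightarrow> 'a \<times> 'a \<Rightarrow> 'a" where
  "qdisc D x y = qtrace D (qmult D x x) * qtrace D (qmult D y y) - qtrace D (qmult D x y) ^ 2"

definition is_square :: "'a::field \<Rightarrow> bool" where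
  "is_square D \<longleftrightarrow> (\<exists>y. D = y ^ 2)"

text \<open>ord of the discriminant ideal of F(sqrt D)/F: the ideal of o generated by all d(x,y)
with x,y integral; in the DVR o its ord is the minimum of the ords of the generators.\<close>
definition ord_disc_ideal :: "('a::field \<Rightarrow> int) \<Rightarrow> 'a \<Rightarrow> int" where
  "ord_disc_ideal ord D =
     (if is_square D then 0 else
      (THE m. m \<in> {ord (qdisc D x y) | x y. qintegral ord D x \<and> qintegral ord D y \<and> qdisc D x y \<noteq> 0}
          \<and> (\<forall>m'\<in>{ord (qdisc D x y) | x y. qintegral ord D x \<and> qintegral ord D y \<and> qdisc D x y \<noteq> 0}. m \<le> m')))"

text \<open>F(sqrt D)/F (D non-square) is unramified iff the (unique) extension w = ord o N / 2 of
ord has the same value group, i.e. ord N(x) is even for every nonzero x.\<close>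
definition qunramified :: "('a::field \<Rightarrow> int) \<Rightarrow> 'a \<Rightarrow> bool" where
  "qunramified ord D \<longleftrightarrow> (\<forall>x. x \<noteq> (0,0) \<longrightarrow> even (ord (qnorm D x)))"

definition xi_of :: "('a::field \<Rightarrow> int) \<Rightarrow> 'a \<Rightarrow> int" where
  "xi_of ord D = (if is_square D then 1 else if qunramified ord D then -1 else 0)"

definition DB :: "'a::field mat \<Rightarrow> 'a" where
  "DB B = (-4) ^ (dim_row B div 2) * det B"

definition xiB :: "('a::field \<Rightarrow> int) \<Rightarrow> 'a mat \<Rightarrow> int" where
  "xiB ord B = xi_of ord (DB B)"

definition DeltaB :: "('a::field \<Rightarrow> int) \<Rightarrow> 'a mat \<Rightarrow> int" where
  "DeltaB ord B = (if odd (dim_row B) then ord (DB B)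
      else ord (DB B) - ord_disc_ideal ord (DB B) + 1 - (xiB ord B)^2)"

definition unimod_diag :: "('a::field \<Rightarrow> int) \<Rightarrow> 'a mat \<Rightarrow> bool" where
  "unimod_diag ord C \<longleftrightarrow> (\<exists>m\<ge>1. C \<in> carrier_mat m m) \<and> diagonal_mat C
      \<and> (\<forall>i<dim_row C. is_unit ord (C $$ (i,i)))"

text \<open>C \<in> (1/2)(S_2(o)_e \<inter> GL_2(o)): 2C is symmetric 2x2 over o, with even diagonal and
invertible over o (determinant a unit).\<close>
definition half_even_unimod :: "('a::field \<Rightarrow> int) \<Rightarrow> 'a mat \<Rightarrow> bool" where
  "half_even_unimod ord C \<longleftrightarrow> C \<in> carrier_mat 2 2 \<and>
     (let M = (2::'a) \<cdot>\<^sub>m C in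
        M $$ (0,1) = M $$ (1,0)
      \<and> (\<forall>i<2. \<forall>j<2. integral ord (M $$ (i,j)))
      \<and> in_2o ord (M $$ (0,0)) \<and> in_2o ord (M $$ (1,1))
      \<and> is_unit ord (det M))"

text \<open>A pre-optimal decomposition is a list bs of pairs (k_i, C_i), i = 1..r (stored 0-indexed).\<close>

definition kk :: "(nat \<times> 'a mat) list \<Rightarrow> nat \<Rightarrow> nat" where
  "kk bs i = fst (bs ! (i - 1))"

definition CC :: "(nat \<times> 'a mat) list \<Rightarrow> nat \<Rightarrow> 'a mat" where
  "CC bs i = snd (bs ! (i - 1))"

definition form_of :: "(nat \<times> 'a::field mat) list \<Rightarrow> 'a mat" where
  "form_of bs = diag_block_mat (map (\<lambda>(k, C). (2::'a) ^ k \<cdot>\<^sub>m C) bs)"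

definition Bpre :: "(nat \<times> 'a::field mat) list \<Rightarrow> nat \<Rightarrow> 'a mat" where
  "Bpre bs j = form_of (take j bs)"

definition isD :: "('a::field \<Rightarrow> int) \<Rightarrow> (nat \<times> 'a mat) list \<Rightarrow> nat \<Rightarrow> bool" where
  "isD ord bs i \<longleftrightarrow> unimod_diag ord (CC bs i)"

definition inD :: "('a::field \<Rightarrow> int) \<Rightarrow> (nat \<times> 'a mat) list \<Rightarrow> nat \<Rightarrow> nat \<Rightarrow> bool" where
  "inD ord bs m j \<longleftrightarrow> 1 \<le> j \<and> j \<le> length bs \<and> kk bs j = m \<and> isD ord bs j"

definition inE :: "('a::field \<Rightarrow> int) \<Rightarrow> (nat \<times> 'a mat) list \<Rightarrow> nat \<Rightarrow> nat \<Rightarrow> bool" where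
  "inE ord bs m j \<longleftrightarrow> 1 \<le> j \<and> j \<le> length bs \<and> kk bs j = m \<and> \<not> isD ord bs j"

definition pre_optimal :: "('a::field \<Rightarrow> int) \<Rightarrow> (nat \<times> 'a mat) list \<Rightarrow> bool" where
  "pre_optimal ord bs \<longleftrightarrow>
    (\<forall>i\<in>{1..length bs}. unimod_diag ord (CC bs i) \<or> half_even_unimod ord (CC bs i))
  \<comment> \<open>PO1\<close>
  \<and> (\<forall>m. (\<Sum>j\<in>{j. inD ord bs m j}. dim_row (CC bs j)) \<le> 2
         \<and> (\<forall>i j l. inE ord bs m i \<longrightarrow> inE ord bs m j \<longrightarrow> i \<le> l \<longrightarrow> l \<le> j \<longrightarrow> inE ord bs m l))
  \<comment> \<open>PO2\<close>
  \<and> (\<forall>i j m1 m2. i < j \<longrightarrow>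
        (inD ord bs m1 i \<longrightarrow> inD ord bs m2 j \<longrightarrow> m1 \<le> m2)
      \<and> (inE ord bs m1 i \<longrightarrow> inE ord bs m2 j \<longrightarrow> m1 \<le> m2)
      \<and> (inD ord bs m1 i \<longrightarrow> inE ord bs m2 j \<longrightarrow> int m1 \<le> int m2 - 1)
      \<and> (inE ord bs m1 i \<longrightarrow> inD ord bs m2 j \<longrightarrow> m1 \<le> m2 + 1))
  \<comment> \<open>PO3\<close>
  \<and> (\<forall>i\<in>{1..length bs}. isD ord bs i \<and> dim_row (CC bs i) = 2 \<longrightarrow>
        i \<ge> 2 \<and>
        ((even (dim_row (Bpre bs i)) \<and> xiB ord (Bpre bs (i-1)) = 0 \<and> xiB ord (Bpre bs i) = 0)
       \<or> (odd (dim_row (Bpre bs (i-1))) \<and> even (ord (det (Bpre bs (i-1))) + int (kk bs i)))))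
  \<comment> \<open>PO4\<close>
  \<and> (\<forall>i\<in>{2..length bs}. int (kk bs i) = int (kk bs (i-1)) - 1 \<and> isD ord bs i \<and> \<not> isD ord bs (i-1) \<longrightarrow>
        dim_row (CC bs i) = 2 \<or>
        (dim_row (CC bs i) = 1 \<and>
          ((even (dim_row (Bpre bs i)) \<and> even (ord (det (Bpre bs i))))
         \<or> (odd (dim_row (Bpre bs i)) \<and> xiB ord (Bpre bs (i-1)) = 0))))
  \<comment> \<open>PO5\<close>
  \<and> (\<forall>i\<in>{1..<length bs}. isD ord bs i \<and> \<not> isD ord bs (i+1) \<and> int (kk bs i) = int (kk bs (i+1)) - 1 \<longrightarrow>
        dim_row (CC bs i) = 1 \<and>
          ((even (dim_row (Bpre bs i)) \<and> odd (ord (det (Bpre bs i))))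
         \<or> (odd (dim_row (Bpre bs i)) \<and> (i \<ge> 2 \<longrightarrow> xiB ord (Bpre bs (i-1)) \<noteq> 0))))
  \<comment> \<open>PO6\<close>
  \<and> (\<forall>i\<in>{1..<length bs}. even (dim_row (Bpre bs i)) \<and> isD ord bs i \<and> isD ord bs (i+1)
        \<and> kk bs (i+1) = kk bs i + 1 \<longrightarrow> xiB ord (Bpre bs i) = 0)"

end

theory Submission
  imports Defs
begin

text \<open>For \<open>D \<noteq> 0\<close> the invariants \<open>\<xi>\<close> and \<open>\<DD>\<close> of \<open>F(\<surd>D)\<close> depend only on \<open>ord D\<close> and on whether
  \<open>D\<close> is a square modulo \<open>4D\<close>: after scaling by a square, \<open>D\<close> is a uniformizer or a unit, and then
  \<open>F(\<surd>D)/F\<close> is ramified with \<open>ord \<DD> = 3\<close> (\<open>ord D\<close> odd), ramified with \<open>ord \<DD> = 2\<close> (\<open>D\<close> not a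
  square modulo \<open>4D\<close>), or unramified or split. The last case rests on Hensel's lemma for
  \<open>w\<^sup>2 + s w = t\<close> and on the perfectness of the finite residue field. So for even \<open>n\<close>,
  \<open>\<Delta>(B)\<close> is \<open>ord D\<^sub>B - 2\<close>, \<open>ord D\<^sub>B - 1\<close> and \<open>ord D\<^sub>B\<close> in these three cases.

  Appending \<open>2\<^sup>k C\<close> multiplies \<open>D\<^sub>B\<close> by a power of \<open>-4\<close> times \<open>2\<^sup>k\<^sup>m det C\<close>, \<open>m = deg C\<close>. For \<open>C\<close>
  unimodular diagonal \<open>det C\<close> is a unit and the claims follow by comparing parities, with (PO3)
  forcing \<open>\<xi> = 0\<close> on both sides when \<open>deg C = 2\<close> and \<open>n\<^sub>1\<close> is even. For
  \<open>C \<in> \<onehalf>(S\<^sub>2(\<o>)\<^sub>e \<inter> GL\<^sub>2(\<o>))\<close>, \<open>-det 2C\<close> is a unit congruent to a square modulo 4, and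
  multiplying by such a unit preserves being a square modulo \<open>4D\<close>.\<close>

subsection \<open>Scaling the discriminant by a square\<close>

definition disc_ords :: "('a::field \<Rightarrow> int) \<Rightarrow> 'a \<Rightarrow> int set" where
  "disc_ords ord D =
     {ord (qdisc D x y) | x y. qintegral ord D x \<and> qintegral ord D y \<and> qdisc D x y \<noteq> 0}"

lemma ord_disc_ideal_eqI:
  assumes "\<not> is_square D" "m \<in> disc_ords ord D" "\<And>m'. m' \<in> disc_ords ord D \<Longrightarrow> m \<le> m'"
  shows "ord_disc_ideal ord D = m"
  using assms unfolding ord_disc_ideal_def disc_ords_def[symmetric]
  by (simp, intro the_equality) (auto intro: antisym)

lemma qdisc_formula: "qdisc D x y = 4 * D * (fst x * snd y - snd x * fst y)\<^sup>2"
  by (simp add: qdisc_def qtrace_def qmult_def power2_eq_square algebra_simps)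

text \<open>\<open>(a, b) \<mapsto> (a, c b)\<close> maps \<open>F(\<surd>(c\<^sup>2 D))\<close> isomorphically onto \<open>F(\<surd>D)\<close>.\<close>

lemma qnorm_mult_square: "qnorm (c\<^sup>2 * D) x = qnorm D (fst x, c * snd x)"
  by (simp add: qnorm_def power_mult_distrib algebra_simps)

lemma qintegral_mult_square: "qintegral ord (c\<^sup>2 * D) x \<longleftrightarrow> qintegral ord D (fst x, c * snd x)"
  by (simp add: qintegral_def qtrace_def qnorm_mult_square)

lemma qdisc_mult_square: "qdisc (c\<^sup>2 * D) x y = qdisc D (fst x, c * snd x) (fst y, c * snd y)"
  by (simp add: qdisc_formula power2_eq_square algebra_simps)

lemma is_square_mult_square:
  assumes "(c::'a::field) \<noteq> 0"
  shows "is_square (c\<^sup>2 * D) \<longleftrightarrow> is_square D"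
proof
  assume "is_square (c\<^sup>2 * D)"
  then obtain y where "c\<^sup>2 * D = y\<^sup>2"
    by (auto simp: is_square_def)
  then have "D = (y / c)\<^sup>2"
    using assms by (simp add: power_divide field_simps)
  then show "is_square D"
    by (auto simp: is_square_def)
qed (metis is_square_def power_mult_distrib)

lemma qunramified_mult_square:
  assumes "(c::'a::field) \<noteq> 0"
  shows "qunramified ord (c\<^sup>2 * D) \<longleftrightarrow> qunramified ord D"
proof
  assume unr: "qunramified ord (c\<^sup>2 * D)"
  show "qunramified ord D"
    unfolding qunramified_def
  proof (intro allI impI)
    fix x :: "'a \<times> 'a" assume "x \<noteq> (0, 0)"
    then have "(fst x, snd x / c) \<noteq> (0, 0)"
      using assms by (cases x) auto
    then have "even (ord (qnorm (c\<^sup>2 * D) (fst x, snd x / c)))"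
      using unr by (simp add: qunramified_def)
    then show "even (ord (qnorm D x))"
      using assms by (simp add: qnorm_mult_square)
  qed
next
  assume unr: "qunramified ord D"
  show "qunramified ord (c\<^sup>2 * D)"
    unfolding qunramified_def
  proof (intro allI impI)
    fix x :: "'a \<times> 'a" assume "x \<noteq> (0, 0)"
    then have "(fst x, c * snd x) \<noteq> (0, 0)"
      using assms by (cases x) auto
    then show "even (ord (qnorm (c\<^sup>2 * D) x))"
      using unr by (simp add: qunramified_def qnorm_mult_square)
  qed
qed

lemma xi_of_mult_square: "(c::'a::field) \<noteq> 0 \<Longrightarrow> xi_of ord (c\<^sup>2 * D) = xi_of ord D"
  by (simp add: xi_of_def is_square_mult_square qunramified_mult_square)

lemma disc_ords_mult_square_subset: "disc_ords ord (c\<^sup>2 * D) \<subseteq> disc_ords ord D"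
  unfolding disc_ords_def qintegral_mult_square qdisc_mult_square by blast

lemma disc_ords_mult_square:
  assumes "(c::'a::field) \<noteq> 0"
  shows "disc_ords ord (c\<^sup>2 * D) = disc_ords ord D"
proof
  have "(inverse c)\<^sup>2 * (c\<^sup>2 * D) = D"
    using assms by (simp add: power_inverse)
  then show "disc_ords ord D \<subseteq> disc_ords ord (c\<^sup>2 * D)"
    using disc_ords_mult_square_subset[of ord "inverse c" "c\<^sup>2 * D"] by argo
qed (rule disc_ords_mult_square_subset)

lemma ord_disc_ideal_mult_square:
  "(c::'a::field) \<noteq> 0 \<Longrightarrow> ord_disc_ideal ord (c\<^sup>2 * D) = ord_disc_ideal ord D"
  unfolding ord_disc_ideal_def disc_ords_def[symmetric]
  by (simp add: is_square_mult_square disc_ords_mult_square)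

subsection \<open>Block diagonal forms\<close>

lemma det_carrier_mat_2:
  assumes "(A :: 'a :: comm_ring_1 mat) \<in> carrier_mat 2 2"
  shows "det A = A $$ (0, 0) * A $$ (1, 1) - A $$ (0, 1) * A $$ (1, 0)"
proof -
  have "det A = (\<Sum>i<2. A $$ (i, 0) * cofactor A i 0)"
    by (rule laplace_expansion_column[OF assms]) auto
  also have "\<dots> = A $$ (0, 0) * cofactor A 0 0 + A $$ (1, 0) * cofactor A 1 0"
    by (simp add: numeral_2_eq_2)
  also have "cofactor A 0 0 = A $$ (1, 1)"
    unfolding cofactor_def using assms by (subst det_single) (auto simp: mat_delete_def)
  also have "cofactor A 1 0 = - A $$ (0, 1)"
    unfolding cofactor_def using assms by (subst det_single) (auto simp: mat_delete_def)
  finally show ?thesis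
    by (simp add: algebra_simps)
qed

lemma form_of_snoc:
  assumes "form_of bs \<in> carrier_mat n n" "C \<in> carrier_mat m m"
  shows "form_of (bs @ [(k, C)]) \<in> carrier_mat (n + m) (n + m)"
    and "det (form_of (bs @ [(k, C)])) = det (form_of bs) * ((2::'a::field) ^ k) ^ m * det C"
proof -
  have C: "(2::'a) ^ k \<cdot>\<^sub>m C \<in> carrier_mat m m"
    using assms(2) by simp
  have eq: "form_of (bs @ [(k, C)]) = four_block_mat (form_of bs) (0\<^sub>m n m) (0\<^sub>m m n) ((2::'a) ^ k \<cdot>\<^sub>m C)"
    using assms by (simp add: form_of_def diag_block_mat_last Let_def)
  show "form_of (bs @ [(k, C)]) \<in> carrier_mat (n + m) (n + m)"
    unfolding eq using four_block_carrier_mat[OF assms(1) C] .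
  show "det (form_of (bs @ [(k, C)])) = det (form_of bs) * (2 ^ k) ^ m * det C"
    unfolding eq using assms by (subst det_four_block_mat_upper_right_zero[OF assms(1) refl _ C]) auto
qed

lemma DB_form_of_snoc:
  assumes "form_of bs \<in> carrier_mat n n" "C \<in> carrier_mat m m"
  shows "DB (form_of (bs @ [(k, C)]))
    = (-4) ^ ((n + m) div 2 - n div 2) * DB (form_of bs) * ((2::'a::field) ^ k) ^ m * det C"
proof -
  have "(-4::'a) ^ ((n + m) div 2) = (-4) ^ ((n + m) div 2 - n div 2) * (-4) ^ (n div 2)"
    by (simp add: power_add[symmetric])
  then show ?thesis
    using form_of_snoc[OF assms, of k] assms(1) by (simp add: DB_def)
qed

lemma form_of_nondegenerate:
  assumes "\<And>p. p \<in> set bs \<Longrightarrow> \<exists>m. snd p \<in> carrier_mat m m \<and> det (snd p) \<noteq> 0"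
  obtains n where "form_of bs \<in> carrier_mat n n" "det (form_of (bs :: (nat \<times> 'a::field_char_0 mat) list)) \<noteq> 0"
  using assms
proof (induct bs arbitrary: thesis rule: rev_induct)
  case Nil
  then show ?case
    using Nil.prems(1)[of 0] by (auto simp: form_of_def)
next
  case (snoc p bs)
  obtain n where n: "form_of bs \<in> carrier_mat n n" "det (form_of bs) \<noteq> 0"
    using snoc by auto
  obtain k C where p: "p = (k, C)"
    by (cases p)
  obtain m where m: "C \<in> carrier_mat m m" "det C \<noteq> 0"
    using snoc.prems(2) p by fastforce
  show ?case
    using snoc.prems(1)[of "n + m"] form_of_snoc[OF n(1) m(1), of k] n m p by simp
qed

subsection \<open>Dyadic valuations\<close>

locale dyadic_field =
  fixes ord :: "'a::field_char_0 \<Rightarrow> int"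
  assumes unram: "unram_ext_Q2 ord"
begin

text \<open>\<open>val_ge n x\<close> says \<open>x \<in> 2\<^sup>n \<o>\<close>, with the convention \<open>ord 0 = \<infinity>\<close>.\<close>

definition val_ge :: "int \<Rightarrow> 'a \<Rightarrow> bool" where
  "val_ge n x \<longleftrightarrow> x = 0 \<or> n \<le> ord x"

lemma ord_mult: "x \<noteq> 0 \<Longrightarrow> y \<noteq> 0 \<Longrightarrow> ord (x * y) = ord x + ord y"
  using unram unfolding unram_ext_Q2_def by blast

lemma ord_add_ge_min: "x \<noteq> 0 \<Longrightarrow> y \<noteq> 0 \<Longrightarrow> x + y \<noteq> 0 \<Longrightarrow> min (ord x) (ord y) \<le> ord (x + y)"
  using unram unfolding unram_ext_Q2_def by blast

lemma ord_2 [simp]: "ord 2 = 1"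
  using unram unfolding unram_ext_Q2_def by blast

lemma ord_1 [simp]: "ord 1 = 0"
  using ord_mult[of 1 1] by simp

lemma ord_4 [simp]: "ord 4 = 2"
  using ord_mult[of 2 2] by simp

lemma ord_uminus [simp]: "ord (- x) = ord x"
proof -
  have "ord (-1) = 0"
    using ord_mult[of "-1" "-1"] by simp
  then show ?thesis
    using ord_mult[of "-1" x] by (cases "x = 0") auto
qed

lemma ord_inverse: "x \<noteq> 0 \<Longrightarrow> ord (inverse x) = - ord x"
  using ord_mult[of x "inverse x"] by simp

lemma ord_divide: "x \<noteq> 0 \<Longrightarrow> y \<noteq> 0 \<Longrightarrow> ord (x / y) = ord x - ord y"
  by (simp add: divide_inverse ord_mult ord_inverse)

lemma ord_power: "x \<noteq> 0 \<Longrightarrow> ord (x ^ n) = int n * ord x"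
  by (induct n) (auto simp: ord_mult algebra_simps)

lemma ord_add_eq_left:
  assumes "x \<noteq> 0" "y \<noteq> 0" "ord x < ord y"
  shows "x + y \<noteq> 0 \<and> ord (x + y) = ord x"
proof -
  have ne: "x + y \<noteq> 0"
    using assms add_eq_0_iff[of x y] by force
  have "ord x \<le> ord (x + y)"
    using ord_add_ge_min[OF assms(1,2) ne] assms by simp
  moreover have "min (ord (x + y)) (ord y) \<le> ord x"
    using ord_add_ge_min[OF ne, of "- y"] assms by simp
  ultimately show ?thesis
    using ne assms by linarith
qed

lemma ord_add_eq_min:
  assumes "x \<noteq> 0" "y \<noteq> 0" "ord x \<noteq> ord y"
  shows "x + y \<noteq> 0 \<and> ord (x + y) = min (ord x) (ord y)"
  using ord_add_eq_left[OF assms(1,2)] ord_add_eq_left[OF assms(2,1)] assms(3)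
  by (cases "ord x < ord y") (auto simp: add.commute)

lemma val_ge_0 [simp]: "val_ge n 0"
  by (simp add: val_ge_def)

lemma val_ge_4: "val_ge 2 4"
  by (simp add: val_ge_def)

lemma val_ge_unit: "x \<noteq> 0 \<Longrightarrow> ord x = 0 \<Longrightarrow> val_ge 0 x"
  by (simp add: val_ge_def)

lemma val_ge_self: "val_ge (ord x) x"
  by (simp add: val_ge_def)

lemma val_ge_mono: "val_ge m x \<Longrightarrow> n \<le> m \<Longrightarrow> val_ge n x"
  by (auto simp: val_ge_def)

lemma val_ge_add: "val_ge n x \<Longrightarrow> val_ge n y \<Longrightarrow> val_ge n (x + y)"
  using ord_add_ge_min[of x y] by (cases "x = 0 \<or> y = 0 \<or> x + y = 0") (auto simp: val_ge_def)

lemma val_ge_uminus [simp]: "val_ge n (- x) \<longleftrightarrow> val_ge n x"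
  by (simp add: val_ge_def)

lemma val_ge_diff: "val_ge n x \<Longrightarrow> val_ge n y \<Longrightarrow> val_ge n (x - y)"
  using val_ge_add[of n x "- y"] by simp

lemma val_ge_diff_commute: "val_ge n (x - y) \<longleftrightarrow> val_ge n (y - x)"
  using val_ge_uminus[of n "x - y"] by simp

lemma val_ge_diff_cancel: "val_ge n (x - y) \<Longrightarrow> val_ge n x \<longleftrightarrow> val_ge n y"
  using val_ge_diff[of n x "x - y"] val_ge_add[of n "x - y" y] by auto

lemma val_ge_mult: "val_ge n x \<Longrightarrow> val_ge m y \<Longrightarrow> val_ge (n + m) (x * y)"
  by (cases "x = 0"; cases "y = 0") (auto simp: val_ge_def ord_mult)

lemma val_ge_mult_integral: "val_ge n x \<Longrightarrow> val_ge 0 y \<Longrightarrow> val_ge n (x * y)"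
  using val_ge_mult[of n x 0 y] by simp

lemma val_ge_integral_mult: "val_ge 0 x \<Longrightarrow> val_ge n y \<Longrightarrow> val_ge n (x * y)"
  using val_ge_mult[of 0 x n y] by simp

lemma val_ge_power2:
  assumes "val_ge n x"
  shows "val_ge (2 * n) (x\<^sup>2)"
proof -
  have "2 * n = n + n"
    by simp
  then show ?thesis
    using val_ge_mult[OF assms assms] by (simp add: power2_eq_square)
qed

lemma val_ge_mult_cancel: "c \<noteq> 0 \<Longrightarrow> val_ge (n + ord c) (c * x) \<longleftrightarrow> val_ge n x"
  by (cases "x = 0") (auto simp: val_ge_def ord_mult)

lemma val_ge_double: "val_ge n (2 * x) \<longleftrightarrow> val_ge (n - 1) x"
  using val_ge_mult_cancel[of 2 "n - 1" x] by simp

lemma val_ge_quarter: "val_ge n (x / 4) \<longleftrightarrow> val_ge (n + 2) x"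
  using val_ge_mult_cancel[of 4 n "x / 4"] by simp

lemma val_ge_power2_cancel: "val_ge (2 * n) (x\<^sup>2) \<Longrightarrow> val_ge n x"
  by (cases "x = 0") (auto simp: val_ge_def ord_power)

lemma val_ge_power2_cancel_odd: "val_ge (2 * n + 1) (x\<^sup>2) \<Longrightarrow> val_ge (n + 1) x"
  by (cases "x = 0") (auto simp: val_ge_def ord_power)

lemma integral_iff_val_ge: "integral ord x \<longleftrightarrow> val_ge 0 x"
  by (simp add: integral_def val_ge_def)

lemma in_2o_iff_val_ge: "in_2o ord x \<longleftrightarrow> val_ge 1 x"
  by (simp add: in_2o_def val_ge_def)

lemma close_iff_val_ge: "close ord M x y \<longleftrightarrow> val_ge M (x - y)"
  by (auto simp: close_def val_ge_def)

lemma val_ge_all_imp_zero: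
  assumes "\<And>M. val_ge M x"
  shows "x = 0"
  using assms[of "ord x + 1"] by (simp add: val_ge_def)

lemma unit_of_congruent_unit:
  assumes "u \<noteq> 0" "ord u = 0" "val_ge 1 (u - v)"
  shows "v \<noteq> 0 \<and> ord v = 0"
proof (cases "u = v")
  case False
  then have ne: "v - u \<noteq> 0" and "1 \<le> ord (u - v)"
    using assms(3) by (simp_all add: val_ge_def)
  moreover have "ord (v - u) = ord (u - v)"
    using ord_uminus[of "u - v"] by simp
  ultimately have "ord u < ord (v - u)"
    using assms(2) by linarith
  then have "u + (v - u) \<noteq> 0 \<and> ord (u + (v - u)) = ord u"
    by (rule ord_add_eq_left[OF assms(1) ne])
  then show ?thesis
    using assms(2) by simp
qed (use assms in simp)

subsection \<open>The residue field is perfect\<close>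

lemma residue_representatives:
  obtains T where "finite T" "\<And>t. t \<in> T \<Longrightarrow> val_ge 0 t"
    "\<And>x. val_ge 0 x \<Longrightarrow> \<exists>t\<in>T. val_ge 1 (x - t)"
    "\<And>t t'. t \<in> T \<Longrightarrow> t' \<in> T \<Longrightarrow> val_ge 1 (t - t') \<Longrightarrow> t = t'"
proof -
  define covers where "covers T \<longleftrightarrow> finite T \<and> (\<forall>x. val_ge 0 x \<longrightarrow> (\<exists>t\<in>T. val_ge 1 (x - t)))" for T
  obtain S where "finite S" "\<forall>x. val_ge 0 x \<longrightarrow> (\<exists>s\<in>S. val_ge 1 (x - s))"
    using unram unfolding unram_ext_Q2_def integral_iff_val_ge in_2o_iff_val_ge by blast
  then have "covers S"
    by (simp add: covers_def)
  then obtain T where T: "covers T" and min: "\<And>T'. covers T' \<Longrightarrow> card T \<le> card T'"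
    using ex_has_least_nat[of covers S card] by blast
  have fin: "finite T" and cover: "\<And>x. val_ge 0 x \<Longrightarrow> \<exists>t\<in>T. val_ge 1 (x - t)"
    using T unfolding covers_def by blast+
  have essential: "\<exists>x. val_ge 0 x \<and> (\<forall>t'\<in>T - {t}. \<not> val_ge 1 (x - t'))" if "t \<in> T" for t
  proof (rule ccontr)
    assume "\<not> ?thesis"
    then have "\<forall>x. val_ge 0 x \<longrightarrow> (\<exists>t'\<in>T - {t}. val_ge 1 (x - t'))"
      by blast
    then have "covers (T - {t})"
      using fin by (simp add: covers_def)
    then show False
      using min[of "T - {t}"] that fin card_Diff1_less[of T t] by linarith
  qed
  show ?thesis
  proof
    fix t assume t: "t \<in> T"
    then obtain x where x: "val_ge 0 x" and none: "\<forall>t'\<in>T - {t}. \<not> val_ge 1 (x - t')"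
      using essential by blast
    obtain t' where t': "t' \<in> T" "val_ge 1 (x - t')"
      using cover[OF x] by blast
    with none have "val_ge 1 (x - t)"
      by blast
    then show "val_ge 0 t"
      using val_ge_diff_cancel[OF val_ge_mono[of 1 "x - t" 0]] x by simp
  next
    fix t t' assume tt': "t \<in> T" "t' \<in> T" "val_ge 1 (t - t')"
    obtain x where x: "val_ge 0 x" and none: "\<forall>t''\<in>T - {t'}. \<not> val_ge 1 (x - t'')"
      using essential[OF tt'(2)] by blast
    obtain t'' where t'': "t'' \<in> T" "val_ge 1 (x - t'')"
      using cover[OF x] by blast
    with none have "val_ge 1 (x - t')"
      by blast
    then have "val_ge 1 ((x - t') - (t - t'))"
      using tt'(3) by (rule val_ge_diff)
    then have "val_ge 1 (x - t)"
      by simp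
    then show "t = t'"
      using none tt'(1) by blast
  next
    show "finite T"
      by (rule fin)
  next
    show "\<And>x. val_ge 0 x \<Longrightarrow> \<exists>t\<in>T. val_ge 1 (x - t)"
      by (rule cover)
  qed
qed

lemma square_congruent_imp_congruent:
  assumes "val_ge 0 a" "val_ge 0 b" "val_ge 1 (a\<^sup>2 - b\<^sup>2)"
  shows "val_ge 1 (a - b)"
proof -
  have "val_ge (1 + 0) (2 * (b * (a - b)))"
    using assms by (intro val_ge_mult val_ge_mult_integral val_ge_diff) (simp_all add: val_ge_def)
  then have "val_ge 1 ((a\<^sup>2 - b\<^sup>2) - 2 * (b * (a - b)))"
    using assms(3) by (simp add: val_ge_diff)
  moreover have "(a\<^sup>2 - b\<^sup>2) - 2 * (b * (a - b)) = (a - b)\<^sup>2"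
    by (simp add: power2_eq_square algebra_simps)
  ultimately show ?thesis
    using val_ge_power2_cancel_odd[of 0] by simp
qed

text \<open>Squaring permutes the finitely many residue classes, since it is injective on them.\<close>

lemma residue_square:
  assumes "val_ge 0 u"
  obtains s where "val_ge 0 s" "val_ge 1 (u - s\<^sup>2)"
proof -
  obtain T where fin: "finite T" and int: "\<And>t. t \<in> T \<Longrightarrow> val_ge 0 t"
    and cover: "\<And>x. val_ge 0 x \<Longrightarrow> \<exists>t\<in>T. val_ge 1 (x - t)"
    and distinct: "\<And>t t'. t \<in> T \<Longrightarrow> t' \<in> T \<Longrightarrow> val_ge 1 (t - t') \<Longrightarrow> t = t'"
    using residue_representatives by blast
  define sq where "sq t = (SOME t'. t' \<in> T \<and> val_ge 1 (t\<^sup>2 - t'))" for t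
  have sq: "sq t \<in> T \<and> val_ge 1 (t\<^sup>2 - sq t)" if "t \<in> T" for t
  proof -
    have "val_ge 0 (t\<^sup>2)"
      using val_ge_power2[of 0 t] int[OF that] by simp
    then have "\<exists>t'. t' \<in> T \<and> val_ge 1 (t\<^sup>2 - t')"
      using cover by blast
    then show ?thesis
      unfolding sq_def by (rule someI_ex)
  qed
  have "inj_on sq T"
  proof (rule inj_onI)
    fix t t' assume tt': "t \<in> T" "t' \<in> T" "sq t = sq t'"
    have "val_ge 1 ((t\<^sup>2 - sq t) - (t'\<^sup>2 - sq t'))"
      using val_ge_diff[OF conjunct2[OF sq[OF tt'(1)]] conjunct2[OF sq[OF tt'(2)]]] .
    then have "val_ge 1 (t\<^sup>2 - t'\<^sup>2)"
      using tt'(3) by simp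
    then have "val_ge 1 (t - t')"
      by (rule square_congruent_imp_congruent[OF int int, OF tt'(1,2)])
    then show "t = t'"
      using distinct tt'(1,2) by blast
  qed
  moreover have "sq ` T \<subseteq> T"
    using sq by blast
  ultimately have surj: "sq ` T = T"
    using endo_inj_surj[OF fin] by simp
  obtain t' where t': "t' \<in> T" "val_ge 1 (u - t')"
    using cover[OF assms] by blast
  then obtain t where t: "t \<in> T" "t' = sq t"
    using surj by blast
  have "val_ge 1 ((u - t') - (t\<^sup>2 - sq t))"
    using val_ge_diff[OF t'(2) conjunct2[OF sq[OF t(1)]]] .
  then have "val_ge 1 (u - t\<^sup>2)"
    using t(2) by simp
  then show ?thesis
    using that int[OF t(1)] by blast
qed

subsection \<open>Hensel's lemma for \<open>w\<^sup>2 + s w = t\<close>\<close>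

lemma limit_of_fast_increments:
  assumes "\<And>n. val_ge (int n) (x (Suc n) - x n)"
  obtains L where "\<And>M. \<exists>N. \<forall>n\<ge>N. val_ge M (x n - L)"
proof -
  have tail: "val_ge (int N) (x (N + d) - x N)" for N d
  proof (induct d)
    case (Suc d)
    have "val_ge (int N) (x (Suc (N + d)) - x (N + d))"
      using val_ge_mono[OF assms[of "N + d"]] by simp
    from val_ge_add[OF this Suc] show ?case
      by simp
  qed simp
  have "\<forall>M. \<exists>N. \<forall>m\<ge>N. \<forall>n\<ge>N. close ord M (x m) (x n)"
  proof (intro allI exI impI)
    fix M m n assume mn: "nat M \<le> m" "nat M \<le> n"
    have "val_ge (int (nat M)) ((x m - x (nat M)) - (x n - x (nat M)))"
      using val_ge_diff[OF tail tail, of "nat M" "m - nat M" "n - nat M"] mn by simp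
    then have "val_ge (int (nat M)) (x m - x n)"
      by simp
    then show "close ord M (x m) (x n)"
      unfolding close_iff_val_ge by (rule val_ge_mono) simp
  qed
  then obtain L where "\<forall>M. \<exists>N. \<forall>n\<ge>N. close ord M (x n) L"
    using unram unfolding unram_ext_Q2_def by blast
  then show ?thesis
    using that unfolding close_iff_val_ge by blast
qed

text \<open>Newton's method for \<open>g w = w\<^sup>2 + s w - t\<close>: as \<open>g' w = 2w + s\<close> is a unit, each step doubles
  the precision.\<close>

lemma newton_step:
  fixes s t y :: 'a
  defines "g \<equiv> \<lambda>w. w\<^sup>2 + s * w - t"
  defines "y' \<equiv> y - g y / (2 * y + s)"
  assumes s: "s \<noteq> 0" "ord s = 0" and y: "val_ge 0 y" and gy: "val_ge e (g y)" and e: "0 \<le> e"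
  shows "val_ge e (y' - y)" "val_ge 0 y'" "val_ge (2 * e) (g y')"
proof -
  have "val_ge 1 (s - (2 * y + s))"
    using val_ge_double[of 1 y] y by simp
  then have u: "2 * y + s \<noteq> 0" "ord (2 * y + s) = 0"
    using unit_of_congruent_unit[OF s] by blast+
  define d where "d = - g y / (2 * y + s)"
  have "val_ge (e + 0) (- g y * inverse (2 * y + s))"
    using gy u by (intro val_ge_mult) (simp_all add: val_ge_def ord_inverse)
  then have d: "val_ge e d"
    by (simp add: d_def divide_inverse)
  have y': "y' = y + d"
    by (simp add: y'_def d_def)
  then show "val_ge e (y' - y)"
    using d by simp
  show "val_ge 0 y'"
    using y' val_ge_add[OF y val_ge_mono[OF d e]] by simp
  have "(2 * y + s) * d = - g y"
    using u by (simp add: d_def)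
  then have "g y' = d\<^sup>2"
    unfolding y' g_def by (simp add: power2_eq_square algebra_simps)
  then show "val_ge (2 * e) (g y')"
    using val_ge_power2[OF d] by simp
qed

lemma hensel_quadratic:
  assumes s: "s \<noteq> 0" "ord s = 0" and t: "val_ge 0 t" and v: "val_ge 0 v"
    and approx: "val_ge 1 (v\<^sup>2 + s * v - t)"
  shows "\<exists>w. w\<^sup>2 + s * w = t"
proof -
  define g where "g w = w\<^sup>2 + s * w - t" for w
  define x where "x n = ((\<lambda>y. y - g y / (2 * y + s)) ^^ n) v" for n
  have x_Suc: "x (Suc n) = x n - g (x n) / (2 * x n + s)" for n
    by (simp add: x_def)
  have x: "val_ge 0 (x n) \<and> val_ge (2 ^ n) (g (x n))" for n
  proof (induct n)
    case 0
    then show ?case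
      using v approx by (simp add: x_def g_def)
  next
    case (Suc n)
    then show ?case
      using newton_step[OF s, of "x n" "2 ^ n"] by (simp add: x_Suc g_def)
  qed
  have increment: "val_ge (int n) (x (Suc n) - x n)" for n
  proof -
    have "val_ge (2 ^ n) (x (Suc n) - x n)"
      using newton_step(1)[OF s, of "x n" "2 ^ n"] x[of n] by (simp add: x_Suc g_def)
    moreover have "int n \<le> 2 ^ n"
      using of_nat_less_two_power[where 'a = int, of n] by linarith
    ultimately show ?thesis
      by (rule val_ge_mono)
  qed
  obtain L where L: "\<And>M. \<exists>N. \<forall>n\<ge>N. val_ge M (x n - L)"
    using limit_of_fast_increments[OF increment] by blast
  text \<open>\<open>g (x n) - g L = (x n - L) (x n + L + s)\<close>, and both terms on the left tend to 0.\<close>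
  have "val_ge M (g L)" if M: "M \<ge> 1" for M
  proof -
    obtain N where N: "\<forall>n\<ge>N. val_ge M (x n - L)"
      using L by blast
    define n where "n = max N (nat M)"
    have close: "val_ge M (x n - L)"
      using N by (simp add: n_def)
    have "val_ge 0 L"
      using val_ge_diff_cancel[OF val_ge_mono[OF close]] x[of n] M by simp
    then have prod: "val_ge (M + 0) ((x n - L) * (x n + L + s))"
      using close x[of n] s by (intro val_ge_mult val_ge_add) (simp_all add: val_ge_unit)
    have "M < 2 ^ nat M"
      using of_nat_less_two_power[where 'a = int, of "nat M"] M by simp
    also have "(2::int) ^ nat M \<le> 2 ^ n"
      by (rule power_increasing) (simp_all add: n_def)
    finally have "val_ge M (g (x n))"
      using val_ge_mono x[of n] by fastforce
    then have "val_ge M (g (x n) - (x n - L) * (x n + L + s))"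
      using prod by (simp add: val_ge_diff)
    moreover have "g (x n) - (x n - L) * (x n + L + s) = g L"
      by (simp add: g_def power2_eq_square algebra_simps)
    ultimately show ?thesis
      by simp
  qed
  then have "g L = 0"
    by (metis val_ge_all_imp_zero val_ge_mono linorder_le_cases)
  then show ?thesis
    by (auto simp: g_def)
qed

subsection \<open>The invariants of \<open>F(\<surd>D)\<close>\<close>

text \<open>\<open>D\<close> is a square modulo \<open>4D\<close>; for a unit \<open>D\<close> this is the classical criterion for \<open>F(\<surd>D)/F\<close>
  to be unramified.\<close>

definition square_mod_4D :: "'a \<Rightarrow> bool" where
  "square_mod_4D D \<longleftrightarrow> (\<exists>s. val_ge (ord D + 2) (D - s\<^sup>2))"

lemma qintegral_iff: "qintegral ord D x \<longleftrightarrow> val_ge 0 (2 * fst x) \<and> val_ge 0 ((fst x)\<^sup>2 - D * (snd x)\<^sup>2)"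
  by (simp add: qintegral_def qtrace_def qnorm_def integral_iff_val_ge)

lemma qintegral_doubled:
  assumes "qintegral ord D x"
  shows "val_ge 0 (2 * fst x)" "val_ge 2 ((2 * fst x)\<^sup>2 - D * (2 * snd x)\<^sup>2)"
proof -
  have "(2 * fst x)\<^sup>2 - D * (2 * snd x)\<^sup>2 = 4 * ((fst x)\<^sup>2 - D * (snd x)\<^sup>2)"
    by (simp add: power2_eq_square algebra_simps)
  moreover have "val_ge 2 (4 * ((fst x)\<^sup>2 - D * (snd x)\<^sup>2))"
    using val_ge_mult[OF val_ge_4, of 0] assms unfolding qintegral_iff by (metis add_0_right)
  ultimately show "val_ge 2 ((2 * fst x)\<^sup>2 - D * (2 * snd x)\<^sup>2)"
    by (simp only:)
  show "val_ge 0 (2 * fst x)"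
    using assms by (simp add: qintegral_iff)
qed

text \<open>If the ring of integers of \<open>F(\<surd>D)\<close> is \<open>\<o>[\<surd>D]\<close>, its discriminant is \<open>4D\<close>.\<close>

lemma ord_disc_ideal_monogenic:
  assumes nsq: "\<not> is_square D" and D: "D \<noteq> 0" "val_ge 0 D"
    and coords: "\<And>x. qintegral ord D x \<Longrightarrow> val_ge 0 (fst x) \<and> val_ge 0 (snd x)"
  shows "ord_disc_ideal ord D = ord D + 2"
proof (rule ord_disc_ideal_eqI[OF nsq])
  have "qdisc D (1, 0) (0, 1) = 4 * D"
    by (simp add: qdisc_formula)
  moreover have "qintegral ord (D) (1, 0)" "qintegral ord D (0, 1)"
    using D by (simp_all add: qintegral_iff val_ge_def)
  ultimately show "ord D + 2 \<in> disc_ords ord D"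
    unfolding disc_ords_def using D by (force simp: ord_mult)
next
  fix m assume "m \<in> disc_ords ord D"
  then obtain x y where m: "m = ord (qdisc D x y)" "qdisc D x y \<noteq> 0"
    and xy: "qintegral ord D x" "qintegral ord D y"
    unfolding disc_ords_def by blast
  have "val_ge 0 (fst x * snd y)" "val_ge 0 (snd x * fst y)"
    using coords[OF xy(1)] coords[OF xy(2)] by (meson val_ge_mult_integral)+
  then have "val_ge 0 (fst x * snd y - snd x * fst y)"
    by (simp add: val_ge_diff)
  then have "val_ge (ord (4 * D) + 2 * 0) (4 * D * (fst x * snd y - snd x * fst y)\<^sup>2)"
    by (intro val_ge_mult val_ge_self val_ge_power2)
  then show "ord D + 2 \<le> m"
    using m D by (simp add: qdisc_formula val_ge_def ord_mult)
qed

lemma norm_form_uniformizer: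
  assumes u: "u \<noteq> 0" "ord u = 1" and E: "val_ge 2 (A\<^sup>2 - u * B\<^sup>2)"
  shows "val_ge 1 A" "val_ge 1 B"
proof -
  have "val_ge 1 A \<and> val_ge 1 B"
  proof (cases "A = 0 \<or> B = 0")
    case True
    then consider "A = 0" "B = 0" | "A = 0" "B \<noteq> 0" | "A \<noteq> 0" "B = 0"
      by blast
    then show ?thesis
      using E u by cases (auto simp: val_ge_def ord_mult ord_power)
  next
    case False
    have "A\<^sup>2 + - (u * B\<^sup>2) \<noteq> 0 \<and> ord (A\<^sup>2 + - (u * B\<^sup>2)) = min (ord (A\<^sup>2)) (ord (- (u * B\<^sup>2)))"
      using False u by (intro ord_add_eq_min) (auto simp: ord_mult ord_power, presburger)
    then show ?thesis
      using E False u by (simp add: val_ge_def ord_mult ord_power)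
  qed
  then show "val_ge 1 A" "val_ge 1 B"
    by simp_all
qed

lemma qintegral_coords_uniformizer:
  assumes "u \<noteq> 0" "ord u = 1" "qintegral ord u x"
  shows "val_ge 0 (fst x) \<and> val_ge 0 (snd x)"
  using norm_form_uniformizer[OF assms(1,2) qintegral_doubled(2)[OF assms(3)]]
  by (simp add: val_ge_double)

lemma xi_disc_uniformizer:
  assumes u: "u \<noteq> 0" "ord u = 1"
  shows "xi_of ord u = 0" "ord_disc_ideal ord u = 3"
proof -
  have nsq: "\<not> is_square u"
    using u by (auto simp: is_square_def ord_power, presburger)
  have "qnorm u (0, 1) = - u"
    by (simp add: qnorm_def)
  then have "\<not> qunramified ord u"
    using u unfolding qunramified_def by (metis odd_one ord_uminus prod.inject zero_neq_one)
  then show "xi_of ord u = 0"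
    using nsq by (simp add: xi_of_def)
  show "ord_disc_ideal ord u = 3"
    using ord_disc_ideal_monogenic[OF nsq u(1)] qintegral_coords_uniformizer[OF u] u
    by (simp add: val_ge_def)
qed

lemma qintegral_unit_doubled:
  assumes u: "u \<noteq> 0" "ord u = 0" and x: "qintegral ord u x"
  shows "val_ge 0 (2 * snd x)"
proof -
  define A where "A = 2 * fst x"
  define B where "B = 2 * snd x"
  have A: "val_ge 0 A" and E: "val_ge 2 (A\<^sup>2 - u * B\<^sup>2)"
    using qintegral_doubled[OF x] by (simp_all add: A_def B_def)
  have "val_ge 0 (A\<^sup>2 - u * B\<^sup>2)"
    using val_ge_mono[OF E] by simp
  then have "val_ge 0 (u * B\<^sup>2)"
    using val_ge_diff_cancel[of 0 "A\<^sup>2" "u * B\<^sup>2"] val_ge_power2[OF A] by simp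
  then show ?thesis
    using u by (cases "B = 0") (auto simp: B_def val_ge_def ord_mult ord_power)
qed

lemma square_mod_4D_unit: "ord u = 0 \<Longrightarrow> square_mod_4D u \<longleftrightarrow> (\<exists>s. val_ge 2 (u - s\<^sup>2))"
  by (simp add: square_mod_4D_def)

lemma qintegral_coords_unit_nonsquare:
  assumes u: "u \<noteq> 0" "ord u = 0" "\<not> square_mod_4D u" and x: "qintegral ord u x"
  shows "val_ge 0 (fst x) \<and> val_ge 0 (snd x)"
proof -
  define A where "A = 2 * fst x"
  define B where "B = 2 * snd x"
  have A: "val_ge 0 A" and B: "val_ge 0 B" and E: "val_ge 2 (A\<^sup>2 - u * B\<^sup>2)"
    using qintegral_doubled[OF x] qintegral_unit_doubled[OF u(1,2) x] by (simp_all add: A_def B_def)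
  text \<open>Otherwise \<open>u \<equiv> (A / B)\<^sup>2\<close> modulo 4.\<close>
  have B1: "val_ge 1 B"
  proof (rule ccontr)
    assume "\<not> val_ge 1 B"
    then have B0: "B \<noteq> 0" "ord B = 0"
      using B by (auto simp: val_ge_def)
    have "val_ge (2 + 0) ((A\<^sup>2 - u * B\<^sup>2) * inverse (B\<^sup>2))"
      using E B0 by (intro val_ge_mult) (simp_all add: val_ge_def ord_inverse ord_power)
    moreover have "(A\<^sup>2 - u * B\<^sup>2) * inverse (B\<^sup>2) = (A / B)\<^sup>2 - u"
      using B0 by (simp add: field_simps power2_eq_square)
    ultimately have "val_ge 2 (u - (A / B)\<^sup>2)"
      using val_ge_diff_commute by simp
    then show False
      using u by (auto simp: square_mod_4D_unit)
  qed
  have "val_ge (0 + 2 * 1) (u * B\<^sup>2)"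
    using u B1 by (intro val_ge_mult val_ge_power2) (simp_all add: val_ge_unit)
  then have "val_ge (2 * 1) (A\<^sup>2)"
    using val_ge_diff_cancel[OF E] by simp
  then have "val_ge 1 A"
    by (rule val_ge_power2_cancel)
  then show ?thesis
    using B1 by (simp add: A_def B_def val_ge_double)
qed

lemma xi_disc_unit_nonsquare:
  assumes u: "u \<noteq> 0" "ord u = 0" and nsq4: "\<not> square_mod_4D u"
  shows "xi_of ord u = 0" "ord_disc_ideal ord u = 2"
proof -
  have nsq: "\<not> is_square u"
  proof
    assume "is_square u"
    then obtain y where "u = y\<^sup>2"
      by (auto simp: is_square_def)
    then have "val_ge 2 (u - y\<^sup>2)"
      by simp
    then show False
      using nsq4 u square_mod_4D_unit by blast
  qed
  obtain s where "val_ge 1 (u - s\<^sup>2)"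
    using residue_square[OF val_ge_unit[OF u(1,2)]] by blast
  moreover have "\<not> val_ge 2 (u - s\<^sup>2)"
    using nsq4 u square_mod_4D_unit by blast
  ultimately have "u - s\<^sup>2 \<noteq> 0" "ord (u - s\<^sup>2) = 1"
    by (auto simp: val_ge_def)
  moreover have "qnorm u (s, 1) = - (u - s\<^sup>2)"
    by (simp add: qnorm_def)
  ultimately have "\<not> qunramified ord u"
    unfolding qunramified_def by (metis ord_uminus odd_one prod.inject zero_neq_one)
  then show "xi_of ord u = 0"
    using nsq by (simp add: xi_of_def)
  show "ord_disc_ideal ord u = 2"
    using ord_disc_ideal_monogenic[OF nsq u(1)] qintegral_coords_unit_nonsquare[OF u nsq4] u
    by (simp add: val_ge_def)
qed

lemma is_square_of_square_mod_8:
  assumes u: "u \<noteq> 0" "ord u = 0" and a: "val_ge 3 (u - a\<^sup>2)"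
  shows "is_square u"
proof -
  have "a\<^sup>2 \<noteq> 0 \<and> ord (a\<^sup>2) = 0"
    using unit_of_congruent_unit[OF u val_ge_mono[OF a]] by simp
  then have a0: "a \<noteq> 0" "ord a = 0"
    by (auto simp: ord_power)
  define t where "t = (u - a\<^sup>2) / 4"
  have "val_ge 1 (0\<^sup>2 + a * 0 - t)"
    using a by (simp add: t_def val_ge_quarter)
  then obtain w where "w\<^sup>2 + a * w = t"
    using hensel_quadratic[OF a0, of t 0] val_ge_mono[of 1 t 0] by auto
  then have "u = (a + 2 * w)\<^sup>2"
    by (simp add: t_def field_simps power2_eq_square)
  then show ?thesis
    by (auto simp: is_square_def)
qed

lemma even_ord_unit_square_sub:
  assumes u: "u \<noteq> 0" "ord u = 0" "\<not> is_square u" and s: "val_ge 2 (u - s\<^sup>2)"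
    and g: "g \<noteq> 0" "ord g = 0"
  shows "ord (g\<^sup>2 - u) = 0 \<or> ord (g\<^sup>2 - u) = 2"
proof -
  have "s\<^sup>2 \<noteq> 0 \<and> ord (s\<^sup>2) = 0"
    using unit_of_congruent_unit[OF u(1,2) val_ge_mono[OF s]] by simp
  then have s0: "s \<noteq> 0" "ord s = 0"
    by (auto simp: ord_power)
  define w where "w = g - s"
  have w0: "val_ge 0 w"
    using g s0 by (simp add: w_def val_ge_diff val_ge_unit)
  have g2: "g\<^sup>2 - s\<^sup>2 = w * (w + 2 * s)"
    by (simp add: w_def power2_eq_square algebra_simps)
  show ?thesis
  proof (cases "val_ge 1 w")
    case False
    then have w1: "w \<noteq> 0" "ord w = 0"
      using w0 by (auto simp: val_ge_def)
    have "val_ge 1 (w - (w + 2 * s))"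
      using val_ge_double[of 1 s] val_ge_unit[OF s0] by simp
    then have "w + 2 * s \<noteq> 0 \<and> ord (w + 2 * s) = 0"
      using unit_of_congruent_unit[OF w1] by blast
    then have P: "w * (w + 2 * s) \<noteq> 0" "ord (w * (w + 2 * s)) = 0"
      using w1 by (simp_all add: ord_mult)
    have "w * (w + 2 * s) - (g\<^sup>2 - u) = u - s\<^sup>2"
      by (simp add: w_def power2_eq_square algebra_simps)
    moreover have "val_ge 1 (u - s\<^sup>2)"
      using val_ge_mono[OF s] by simp
    ultimately have "val_ge 1 (w * (w + 2 * s) - (g\<^sup>2 - u))"
      by (simp only:)
    then show ?thesis
      using unit_of_congruent_unit[OF P] by blast
  next
    case True
    text \<open>Now \<open>g \<equiv> s\<close> modulo 2, so \<open>g\<^sup>2 \<equiv> u\<close> modulo 4 but not modulo 8.\<close>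
    have "val_ge (1 + 1) (w * (w + 2 * s))"
      using True s0 by (intro val_ge_mult val_ge_add) (simp_all add: val_ge_unit val_ge_double)
    then have "val_ge 2 ((g\<^sup>2 - s\<^sup>2) - (u - s\<^sup>2))"
      using g2 s by (simp add: val_ge_diff)
    moreover have "\<not> val_ge 3 (u - g\<^sup>2)"
      using is_square_of_square_mod_8[OF u(1,2)] u(3) by blast
    moreover have "g\<^sup>2 - u \<noteq> 0"
      using u(3) by (auto simp: is_square_def)
    ultimately show ?thesis
      using val_ge_diff_commute[of 3 u "g\<^sup>2"] by (simp add: val_ge_def)
  qed
qed

lemma qunramified_unit_square_mod_4D:
  assumes u: "u \<noteq> 0" "ord u = 0" "\<not> is_square u" and s: "val_ge 2 (u - s\<^sup>2)"
  shows "qunramified ord u"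
  unfolding qunramified_def
proof (intro allI impI)
  fix z :: "'a \<times> 'a" assume z: "z \<noteq> (0, 0)"
  obtain p q where pq: "z = (p, q)"
    by (cases z)
  have N: "qnorm u z = p\<^sup>2 - u * q\<^sup>2"
    by (simp add: pq qnorm_def)
  show "even (ord (qnorm u z))"
  proof (cases "p = 0 \<or> q = 0")
    case True
    then show ?thesis
      using N z u pq by (auto simp: ord_mult ord_power)
  next
    case False
    then have p: "p\<^sup>2 \<noteq> 0" "ord (p\<^sup>2) = 2 * ord p" and q: "- (u * q\<^sup>2) \<noteq> 0" "ord (- (u * q\<^sup>2)) = 2 * ord q"
      using u by (simp_all add: ord_mult ord_power)
    show ?thesis
    proof (cases "ord p = ord q")
      case False
      then show ?thesis
        using ord_add_eq_min[OF p(1) q(1)] p q N by (simp add: min_def del: ord_uminus)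
    next
      case True
      define g where "g = p / q"
      have g: "g \<noteq> 0" "ord g = 0"
        using \<open>\<not> (p = 0 \<or> q = 0)\<close> True by (auto simp: g_def ord_divide)
      have "qnorm u z = q\<^sup>2 * (g\<^sup>2 - u)"
        using \<open>\<not> (p = 0 \<or> q = 0)\<close> N by (simp add: g_def power_divide right_diff_distrib)
      moreover have "g\<^sup>2 - u \<noteq> 0"
        using u(3) by (auto simp: is_square_def)
      ultimately show ?thesis
        using even_ord_unit_square_sub[OF u s g] \<open>\<not> (p = 0 \<or> q = 0)\<close> by (auto simp: ord_mult ord_power)
    qed
  qed
qed

text \<open>With \<open>A = 2a, B = 2b\<close> etc., \<open>qdisc u x y = u (AE - BC)\<^sup>2 / 4\<close>, and \<open>(AE)\<^sup>2 \<equiv> u (BE)\<^sup>2 \<equiv> (BC)\<^sup>2\<close>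
  modulo 4.\<close>

lemma qdisc_integral_unit:
  assumes u: "u \<noteq> 0" "ord u = 0" and x: "qintegral ord u x" and y: "qintegral ord u y"
  shows "val_ge 0 (qdisc u x y)"
proof -
  define A B C E where "A = 2 * fst x" and "B = 2 * snd x" and "C = 2 * fst y" and "E = 2 * snd y"
  have A: "val_ge 0 A" "val_ge 2 (A\<^sup>2 - u * B\<^sup>2)" and B: "val_ge 0 B"
    using qintegral_doubled[OF x] qintegral_unit_doubled[OF u x] by (simp_all add: A_def B_def)
  have C: "val_ge 0 C" "val_ge 2 (C\<^sup>2 - u * E\<^sup>2)" and E: "val_ge 0 E"
    using qintegral_doubled[OF y] qintegral_unit_doubled[OF u y] by (simp_all add: C_def E_def)
  have AE: "val_ge 0 (A * E)" and BC: "val_ge 0 (B * C)"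
    using A B C E by (simp_all add: val_ge_mult_integral)
  have "val_ge 0 (B\<^sup>2)" "val_ge 0 (E\<^sup>2)"
    using val_ge_power2[OF B] val_ge_power2[OF E] by simp_all
  then have "val_ge 2 ((A\<^sup>2 - u * B\<^sup>2) * E\<^sup>2 - B\<^sup>2 * (C\<^sup>2 - u * E\<^sup>2))"
    using A(2) C(2) by (simp add: val_ge_diff val_ge_mult_integral val_ge_integral_mult)
  moreover have "(A\<^sup>2 - u * B\<^sup>2) * E\<^sup>2 - B\<^sup>2 * (C\<^sup>2 - u * E\<^sup>2) = (A * E)\<^sup>2 - (B * C)\<^sup>2"
    by (simp add: power2_eq_square algebra_simps)
  ultimately have "val_ge 1 ((A * E)\<^sup>2 - (B * C)\<^sup>2)"
    using val_ge_mono by fastforce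
  then have "val_ge 1 (A * E - B * C)"
    by (rule square_congruent_imp_congruent[OF AE BC])
  then have "val_ge (0 + 2 * 1) (u * (A * E - B * C)\<^sup>2)"
    using u by (intro val_ge_mult val_ge_power2) (simp_all add: val_ge_unit)
  then have "val_ge 0 (u * (A * E - B * C)\<^sup>2 / 4)"
    by (simp add: val_ge_quarter)
  moreover have "u * (A * E - B * C)\<^sup>2 / 4 = qdisc u x y"
    by (simp add: qdisc_formula A_def B_def C_def E_def power2_eq_square field_simps)
  ultimately show ?thesis
    by simp
qed

lemma xi_disc_unit_square:
  assumes u: "u \<noteq> 0" "ord u = 0" and sq4: "square_mod_4D u"
  shows "xi_of ord u \<noteq> 0" "ord_disc_ideal ord u = 0"
proof -
  obtain s where s: "val_ge 2 (u - s\<^sup>2)"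
    using sq4 u by (auto simp: square_mod_4D_unit)
  have "ord_disc_ideal ord u = 0 \<and> xi_of ord u \<noteq> 0"
  proof (cases "is_square u")
    case True
    then show ?thesis
      by (simp add: xi_of_def ord_disc_ideal_def)
  next
    case nsq: False
    have "ord_disc_ideal ord u = 0"
    proof (rule ord_disc_ideal_eqI[OF nsq])
      have "s\<^sup>2 \<noteq> 0 \<and> ord (s\<^sup>2) = 0"
        using unit_of_congruent_unit[OF u val_ge_mono[OF s]] by simp
      then have s0: "val_ge 0 s"
        by (auto simp: ord_power val_ge_def)
      have "val_ge 0 ((s\<^sup>2 - u) / 4)"
        using s val_ge_diff_commute by (simp add: val_ge_quarter)
      moreover have "(s\<^sup>2 - u) / 4 = (s / 2)\<^sup>2 - u * (1 / 2)\<^sup>2"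
        by (simp add: power2_eq_square field_simps)
      ultimately have "qintegral ord u (s / 2, 1 / 2)"
        using s0 by (simp add: qintegral_iff)
      moreover have "qintegral ord u (1, 0)"
        by (simp add: qintegral_iff val_ge_def)
      moreover have "qdisc u (1, 0) (s / 2, 1 / 2) = u"
        by (simp add: qdisc_formula power2_eq_square)
      ultimately show "0 \<in> disc_ords ord u"
        unfolding disc_ords_def using u by force
    next
      fix m assume "m \<in> disc_ords ord u"
      then show "0 \<le> m"
        unfolding disc_ords_def using qdisc_integral_unit[OF u] by (auto simp: val_ge_def)
    qed
    then show ?thesis
      using qunramified_unit_square_mod_4D[OF u nsq s] nsq by (simp add: xi_of_def)
  qed
  then show "xi_of ord u \<noteq> 0" "ord_disc_ideal ord u = 0"
    by simp_all
qed

lemma exists_square_scaling: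
  assumes "D \<noteq> 0"
  obtains c where "c \<noteq> 0" "ord (c\<^sup>2 * D) = ord D mod 2"
proof -
  define j where "j = ord D div 2"
  define c :: 'a where "c = (if j \<ge> 0 then inverse 2 ^ nat j else 2 ^ nat (- j))"
  have c: "c \<noteq> 0" "ord c = - j"
    by (simp_all add: c_def ord_power ord_divide)
  then have "ord (c\<^sup>2 * D) = ord D - 2 * (ord D div 2)"
    using assms by (simp add: ord_mult ord_power j_def)
  also have "\<dots> = ord D mod 2"
    by (rule minus_mult_div_eq_mod)
  finally show ?thesis
    using that c(1) by blast
qed

lemma square_mod_4D_mult_square_imp:
  assumes "c \<noteq> 0" "D \<noteq> 0" "square_mod_4D D"
  shows "square_mod_4D (c\<^sup>2 * D)"
proof -
  obtain s where "val_ge (ord D + 2) (D - s\<^sup>2)"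
    using assms(3) by (auto simp: square_mod_4D_def)
  then have "val_ge (ord D + 2 + ord (c\<^sup>2)) (c\<^sup>2 * (D - s\<^sup>2))"
    using val_ge_mult_cancel[of "c\<^sup>2"] assms(1) by simp
  moreover have "c\<^sup>2 * (D - s\<^sup>2) = c\<^sup>2 * D - (c * s)\<^sup>2"
    by (simp add: power2_eq_square algebra_simps)
  moreover have "ord (c\<^sup>2 * D) = ord (c\<^sup>2) + ord D"
    using assms by (simp add: ord_mult)
  ultimately show ?thesis
    unfolding square_mod_4D_def by (metis add.commute add.left_commute)
qed

lemma square_mod_4D_mult_square:
  assumes "c \<noteq> 0" "D \<noteq> 0"
  shows "square_mod_4D (c\<^sup>2 * D) \<longleftrightarrow> square_mod_4D D"
proof
  assume sq: "square_mod_4D (c\<^sup>2 * D)"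
  have "square_mod_4D ((inverse c)\<^sup>2 * (c\<^sup>2 * D))"
    by (rule square_mod_4D_mult_square_imp) (use assms sq in simp_all)
  moreover have "(inverse c)\<^sup>2 * (c\<^sup>2 * D) = D"
    using assms by (simp add: power_inverse)
  ultimately show "square_mod_4D D"
    by (simp only:)
qed (rule square_mod_4D_mult_square_imp[OF assms])

text \<open>The three cases: \<open>F(\<surd>D)/F\<close> is ramified with discriminant \<open>8\<o>\<close>, ramified with
  discriminant \<open>4\<o>\<close>, or unramified or split.\<close>

lemma xi_disc_classification:
  assumes D: "D \<noteq> 0"
  shows "odd (ord D) \<Longrightarrow> xi_of ord D = 0 \<and> ord_disc_ideal ord D = 3"
    and "even (ord D) \<Longrightarrow> \<not> square_mod_4D D \<Longrightarrow> xi_of ord D = 0 \<and> ord_disc_ideal ord D = 2"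
    and "even (ord D) \<Longrightarrow> square_mod_4D D \<Longrightarrow> xi_of ord D \<noteq> 0 \<and> ord_disc_ideal ord D = 0"
proof -
  obtain c where c: "c \<noteq> 0" "ord (c\<^sup>2 * D) = ord D mod 2"
    using exists_square_scaling[OF D] by blast
  define u where "u = c\<^sup>2 * D"
  have u: "u \<noteq> 0" "ord u = ord D mod 2"
    using c D by (simp_all add: u_def)
  have invariants: "xi_of ord u = xi_of ord D" "ord_disc_ideal ord u = ord_disc_ideal ord D"
    "square_mod_4D u \<longleftrightarrow> square_mod_4D D"
    using c D by (simp_all add: u_def xi_of_mult_square ord_disc_ideal_mult_square
        square_mod_4D_mult_square)
  show "odd (ord D) \<Longrightarrow> xi_of ord D = 0 \<and> ord_disc_ideal ord D = 3"
    using xi_disc_uniformizer[OF u(1)] u(2) invariants by (simp add: odd_iff_mod_2_eq_one)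
  show "even (ord D) \<Longrightarrow> \<not> square_mod_4D D \<Longrightarrow> xi_of ord D = 0 \<and> ord_disc_ideal ord D = 2"
    using xi_disc_unit_nonsquare[OF u(1)] u(2) invariants by simp
  show "even (ord D) \<Longrightarrow> square_mod_4D D \<Longrightarrow> xi_of ord D \<noteq> 0 \<and> ord_disc_ideal ord D = 0"
    using xi_disc_unit_square[OF u(1)] u(2) invariants by simp
qed

lemma square_mod_4D_mult_unit_imp:
  assumes w: "w \<noteq> 0" "ord w = 0" "val_ge 2 (w - b\<^sup>2)" and D: "D \<noteq> 0" "square_mod_4D D"
  shows "square_mod_4D (w * D)"
proof -
  obtain s where s: "val_ge (ord D + 2) (D - s\<^sup>2)"
    using D(2) by (auto simp: square_mod_4D_def)
  have "val_ge (ord D) (D - (D - s\<^sup>2))"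
    by (rule val_ge_diff[OF val_ge_self val_ge_mono[OF s]]) simp
  then have "val_ge (ord D + 2) (w * (D - s\<^sup>2) + s\<^sup>2 * (w - b\<^sup>2))"
    using s w by (intro val_ge_add val_ge_integral_mult val_ge_mult) (simp_all add: val_ge_unit)
  moreover have "w * (D - s\<^sup>2) + s\<^sup>2 * (w - b\<^sup>2) = w * D - (b * s)\<^sup>2"
    by (simp add: power2_eq_square algebra_simps)
  moreover have "ord (w * D) = ord D"
    using w D by (simp add: ord_mult)
  ultimately show ?thesis
    unfolding square_mod_4D_def by metis
qed

lemma square_mod_4D_mult_unit:
  assumes w: "w \<noteq> 0" "ord w = 0" "val_ge 2 (w - b\<^sup>2)" and D: "D \<noteq> 0"
  shows "square_mod_4D (w * D) \<longleftrightarrow> square_mod_4D D"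
proof
  assume sq: "square_mod_4D (w * D)"
  have "b\<^sup>2 \<noteq> 0 \<and> ord (b\<^sup>2) = 0"
    using unit_of_congruent_unit[OF w(1,2) val_ge_mono[OF w(3)]] by simp
  then have b: "b\<^sup>2 \<noteq> 0" "ord (inverse (w * b\<^sup>2)) = 0"
    using w by (simp_all add: ord_inverse ord_mult)
  have "val_ge (2 + 0) ((b\<^sup>2 - w) * inverse (w * b\<^sup>2))"
    using w b by (intro val_ge_mult) (simp_all add: val_ge_diff_commute[of 2 "b\<^sup>2"] val_ge_unit)
  moreover have "(b\<^sup>2 - w) * inverse (w * b\<^sup>2) = inverse w - (inverse b)\<^sup>2"
    using w b by (simp add: field_simps power2_eq_square)
  ultimately have "val_ge 2 (inverse w - (inverse b)\<^sup>2)"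
    by simp
  moreover have "inverse w \<noteq> 0" "ord (inverse w) = 0" "w * D \<noteq> 0"
    using w D by (simp_all add: ord_inverse)
  ultimately have "square_mod_4D (inverse w * (w * D))"
    using sq square_mod_4D_mult_unit_imp by blast
  then show "square_mod_4D D"
    using w by (simp add: mult.assoc[symmetric])
qed (rule square_mod_4D_mult_unit_imp[OF w D])

lemma ord_DB:
  assumes "det B \<noteq> 0"
  shows "DB B \<noteq> 0" "ord (DB B) = 2 * int (dim_row B div 2) + ord (det B)"
  using assms by (simp_all add: DB_def ord_mult ord_power)

lemma xiB_eq_0_iff:
  assumes "det B \<noteq> 0"
  shows "xiB ord B = 0 \<longleftrightarrow> odd (ord (DB B)) \<or> \<not> square_mod_4D (DB B)"
  using xi_disc_classification[OF ord_DB(1)[OF assms]] by (auto simp: xiB_def)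

lemma DeltaB_even:
  assumes "even (dim_row B)" "det B \<noteq> 0"
  shows "DeltaB ord B
    = ord (DB B) - (if odd (ord (DB B)) then 2 else if square_mod_4D (DB B) then 0 else 1)"
proof -
  have "(xi_of ord (DB B))\<^sup>2 = 1" if "xi_of ord (DB B) \<noteq> 0"
    using that by (auto simp: xi_of_def split: if_splits)
  then show ?thesis
    using xi_disc_classification[OF ord_DB(1)[OF assms(2)]] assms(1)
    by (auto simp: DeltaB_def xiB_def)
qed

subsection \<open>Appending a block to a pre-optimal form\<close>

lemma ord_prod_list_units:
  "(\<And>x. x \<in> set xs \<Longrightarrow> x \<noteq> 0 \<and> ord x = 0) \<Longrightarrow> prod_list xs \<noteq> 0 \<and> ord (prod_list xs) = 0"
  by (induct xs) (auto simp: ord_mult)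

lemma unimod_diag_det:
  assumes "unimod_diag ord C"
  obtains m where "C \<in> carrier_mat m m" "det C \<noteq> 0" "ord (det C) = 0"
proof -
  obtain m where m: "C \<in> carrier_mat m m" and "diagonal_mat C"
    and units: "\<forall>i<dim_row C. is_unit ord (C $$ (i, i))"
    using assms unfolding unimod_diag_def by blast
  then have "upper_triangular C"
    unfolding diagonal_mat_def upper_triangular_def by auto
  then have "det C = prod_list (diag_mat C)"
    using m by (rule det_upper_triangular)
  moreover have "x \<noteq> 0 \<and> ord x = 0" if "x \<in> set (diag_mat C)" for x
    using that units by (auto simp: diag_mat_def is_unit_def)
  ultimately show ?thesis
    using that m ord_prod_list_units by metis
qed

text \<open>For \<open>2C = [[a, b], [b, d]]\<close> with \<open>a, d \<in> 2\<o>\<close>, \<open>-det (2C) = b\<^sup>2 - ad\<close> is a unit and a square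
  modulo 4.\<close>

lemma half_even_unimod_det:
  assumes "half_even_unimod ord C"
  obtains b where "C \<in> carrier_mat 2 2" "- (4 * det C) \<noteq> 0" "ord (- (4 * det C)) = 0"
    "val_ge 2 (- (4 * det C) - b\<^sup>2)"
proof -
  define M where "M = (2::'a) \<cdot>\<^sub>m C"
  have C: "C \<in> carrier_mat 2 2" and sym: "M $$ (0, 1) = M $$ (1, 0)"
    and diag: "val_ge 1 (M $$ (0, 0))" "val_ge 1 (M $$ (1, 1))" and unit: "is_unit ord (det M)"
    using assms unfolding half_even_unimod_def Let_def M_def in_2o_iff_val_ge by auto
  have M: "M \<in> carrier_mat 2 2"
    using C by (simp add: M_def)
  have det: "det M = 4 * det C"
    using C by (simp add: M_def)
  have "- det M - (M $$ (0, 1))\<^sup>2 = - (M $$ (0, 0) * M $$ (1, 1))"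
    using det_carrier_mat_2[OF M] sym by (simp add: power2_eq_square)
  moreover have "val_ge (1 + 1) (M $$ (0, 0) * M $$ (1, 1))"
    using diag by (rule val_ge_mult)
  ultimately have "val_ge 2 (- det M - (M $$ (0, 1))\<^sup>2)"
    by simp
  then show ?thesis
    using that C unit det by (simp add: is_unit_def)
qed

lemma block_nondegenerate:
  assumes "unimod_diag ord C \<or> half_even_unimod ord C"
  shows "\<exists>m. C \<in> carrier_mat m m \<and> det C \<noteq> 0"
  using assms unimod_diag_det half_even_unimod_det by (metis mult_zero_right neg_0_equal_iff_equal)

lemma ord_DB_form_of_snoc:
  fixes bs :: "(nat \<times> 'a mat) list" and k :: nat and C :: "'a mat"
  assumes B1: "form_of bs \<in> carrier_mat n n" "det (form_of bs) \<noteq> 0"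
    and C: "C \<in> carrier_mat m m" "det C \<noteq> 0"
  defines "B \<equiv> form_of (bs @ [(k, C)])"
  shows "dim_row B = n + m" "det B \<noteq> 0"
    and "ord (DB B) = ord (DB (form_of bs)) + 2 * int ((n + m) div 2 - n div 2) + int k * int m + ord (det C)"
proof -
  show "dim_row B = n + m" "det B \<noteq> 0"
    using form_of_snoc[OF B1(1) C(1), of k] B1 C by (simp_all add: B_def)
  have "ord (((2::'a) ^ k) ^ m) = int k * int m"
    by (simp add: ord_power)
  then show "ord (DB B) = ord (DB (form_of bs)) + 2 * int ((n + m) div 2 - n div 2) + int k * int m + ord (det C)"
    unfolding B_def DB_form_of_snoc[OF B1(1) C(1)]
    using ord_DB(1)[OF B1(2)] C(2) by (simp add: ord_mult ord_power)
qed

lemma DeltaB_snoc_rank_one: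
  fixes bs :: "(nat \<times> 'a mat) list" and k :: nat and C :: "'a mat"
  defines "B1 \<equiv> form_of bs" and "B \<equiv> form_of (bs @ [(k, C)])"
  assumes B1: "B1 \<in> carrier_mat n n" "det B1 \<noteq> 0"
    and C: "C \<in> carrier_mat 1 1" "det C \<noteq> 0" "ord (det C) = 0"
  shows "even n \<Longrightarrow> odd (ord (det B1)) \<Longrightarrow> DeltaB ord B - DeltaB ord B1 = int k + 2"
    and "even n \<Longrightarrow> even (ord (det B1)) \<Longrightarrow> xiB ord B1 = 0 \<Longrightarrow> DeltaB ord B - DeltaB ord B1 = int k + 1"
    and "even n \<Longrightarrow> xiB ord B1 \<noteq> 0 \<Longrightarrow> DeltaB ord B - DeltaB ord B1 = int k"
    and "odd n \<Longrightarrow> odd (ord (det B)) \<Longrightarrow> DeltaB ord B - DeltaB ord B1 = int k"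
    and "odd n \<Longrightarrow> even (ord (det B)) \<Longrightarrow> xiB ord B = 0 \<Longrightarrow> DeltaB ord B - DeltaB ord B1 = int k + 1"
    and "odd n \<Longrightarrow> xiB ord B \<noteq> 0 \<Longrightarrow> DeltaB ord B - DeltaB ord B1 = int k + 2"
proof -
  note B = ord_DB_form_of_snoc[OF B1[unfolded B1_def] C(1,2), of k, folded B_def B1_def]
  have detB: "ord (det B) = ord (det B1) + int k"
    using form_of_snoc(2)[OF B1(1)[unfolded B1_def] C(1), of k] B1 C
    by (simp add: B_def B1_def ord_mult ord_power)
  have B1n: "dim_row B1 = n"
    using B1 by simp
  show "even n \<Longrightarrow> odd (ord (det B1)) \<Longrightarrow> DeltaB ord B - DeltaB ord B1 = int k + 2"
    and "even n \<Longrightarrow> even (ord (det B1)) \<Longrightarrow> xiB ord B1 = 0 \<Longrightarrow> DeltaB ord B - DeltaB ord B1 = int k + 1"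
    and "even n \<Longrightarrow> xiB ord B1 \<noteq> 0 \<Longrightarrow> DeltaB ord B - DeltaB ord B1 = int k"
    using B DeltaB_even[OF _ B1(2)] xiB_eq_0_iff[OF B1(2)] ord_DB(2)[OF B1(2)] C(3) B1n
    by (auto simp: DeltaB_def)
  show "odd n \<Longrightarrow> odd (ord (det B)) \<Longrightarrow> DeltaB ord B - DeltaB ord B1 = int k"
    and "odd n \<Longrightarrow> even (ord (det B)) \<Longrightarrow> xiB ord B = 0 \<Longrightarrow> DeltaB ord B - DeltaB ord B1 = int k + 1"
    and "odd n \<Longrightarrow> xiB ord B \<noteq> 0 \<Longrightarrow> DeltaB ord B - DeltaB ord B1 = int k + 2"
    using B DeltaB_even[OF _ B(2)] xiB_eq_0_iff[OF B(2)] ord_DB(2)[OF B(2)] ord_DB(2)[OF B1(2)]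
      C(3) B1n detB
    by (auto simp: DeltaB_def)
qed

lemma DeltaB_snoc_unimodular_rank_two:
  fixes bs :: "(nat \<times> 'a mat) list" and k :: nat and C :: "'a mat"
  defines "B1 \<equiv> form_of bs" and "B \<equiv> form_of (bs @ [(k, C)])"
  assumes B1: "B1 \<in> carrier_mat n n" "det B1 \<noteq> 0"
    and C: "C \<in> carrier_mat 2 2" "det C \<noteq> 0" "ord (det C) = 0"
    and xi: "even n \<Longrightarrow> xiB ord B1 = 0 \<and> xiB ord B = 0"
  shows "DeltaB ord B = DeltaB ord B1 + 2 * int k + 2"
proof -
  note B = ord_DB_form_of_snoc[OF B1[unfolded B1_def] C(1,2), of k, folded B_def B1_def]
  have B1n: "dim_row B1 = n"
    using B1 by simp
  have "(n + 2) div 2 - n div 2 = 1"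
    by simp
  then show ?thesis
    using B DeltaB_even[OF _ B(2)] DeltaB_even[OF _ B1(2)] xiB_eq_0_iff[OF B(2)]
      xiB_eq_0_iff[OF B1(2)] xi C(3) B1n
    by (cases "even n") (auto simp: DeltaB_def split: if_splits)
qed

lemma DeltaB_snoc_half_even_unimod:
  fixes bs :: "(nat \<times> 'a mat) list" and k :: nat and C :: "'a mat"
  defines "B1 \<equiv> form_of bs" and "B \<equiv> form_of (bs @ [(k, C)])"
  assumes B1: "B1 \<in> carrier_mat n n" "det B1 \<noteq> 0" and C: "half_even_unimod ord C"
  shows "DeltaB ord B = DeltaB ord B1 + 2 * int k"
proof -
  define w where "w = - (4 * det C)"
  obtain b where C2: "C \<in> carrier_mat 2 2" and w: "w \<noteq> 0" "ord w = 0" "val_ge 2 (w - b\<^sup>2)"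
    using half_even_unimod_det[OF C] unfolding w_def by blast
  have detC: "det C \<noteq> 0" "ord (det C) = - 2"
    using w ord_mult[of "-4" "det C"] by (simp_all add: w_def)
  note B = ord_DB_form_of_snoc[OF B1[unfolded B1_def] C2 detC(1), of k, folded B_def B1_def]
  have B1n: "dim_row B1 = n"
    using B1 by simp
  have "(n + 2) div 2 - n div 2 = 1"
    by simp
  then have "DB B = ((2::'a) ^ k)\<^sup>2 * (w * DB B1)"
    unfolding B_def B1_def DB_form_of_snoc[OF B1(1)[unfolded B1_def] C2]
    by (simp add: w_def power_mult_distrib power_mult[symmetric] mult.commute mult.left_commute)
  then have "square_mod_4D (DB B) \<longleftrightarrow> square_mod_4D (DB B1)"
    using square_mod_4D_mult_square[of "2 ^ k" "w * DB B1"] square_mod_4D_mult_unit[OF w]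
      ord_DB(1)[OF B1(2)] w(1) by simp
  then show ?thesis
    using B DeltaB_even[OF _ B(2)] DeltaB_even[OF _ B1(2)] detC B1n \<open>(n + 2) div 2 - n div 2 = 1\<close>
    by (cases "even n") (auto simp: DeltaB_def)
qed

end

lemma pre_optimal_blocks:
  assumes "pre_optimal ord bs" "p \<in> set bs"
  shows "unimod_diag ord (snd p) \<or> half_even_unimod ord (snd p)"
proof -
  obtain i where i: "i < length bs" "bs ! i = p"
    using assms(2) by (auto simp: in_set_conv_nth)
  then have "Suc i \<in> {1..length bs}" "CC bs (Suc i) = snd p"
    by (simp_all add: CC_def)
  then show ?thesis
    using assms(1) unfolding pre_optimal_def by metis
qed

lemma pre_optimal_last_rank_two_xiB:
  assumes po: "pre_optimal ord bs" and "bs \<noteq> []"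
    and C: "unimod_diag ord (snd (last bs))" "dim_row (snd (last bs)) = 2"
    and even: "even (dim_row (form_of (butlast bs)))"
  shows "xiB ord (form_of (butlast bs)) = 0 \<and> xiB ord (form_of bs) = 0"
proof -
  define L where "L = length bs"
  have L: "L \<in> {1..length bs}" "isD ord bs L" "dim_row (CC bs L) = 2"
    using assms(2) C by (simp_all add: L_def Suc_le_eq CC_def isD_def last_conv_nth)
  have B: "Bpre bs L = form_of bs" "Bpre bs (L - 1) = form_of (butlast bs)"
    by (simp_all add: Bpre_def L_def butlast_conv_take)
  have "\<forall>i\<in>{1..length bs}. isD ord bs i \<and> dim_row (CC bs i) = 2 \<longrightarrow> i \<ge> 2 \<and>
      ((even (dim_row (Bpre bs i)) \<and> xiB ord (Bpre bs (i - 1)) = 0 \<and> xiB ord (Bpre bs i) = 0)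
       \<or> (odd (dim_row (Bpre bs (i - 1))) \<and> even (ord (det (Bpre bs (i - 1))) + int (kk bs i))))"
    using po unfolding pre_optimal_def by (elim conjE) assumption
  then show ?thesis
    using L B even by fastforce
qed

theorem lemma2p2:
  fixes ord :: "'a::field_char_0 \<Rightarrow> int"
    and bs :: "(nat \<times> 'a mat) list"
  assumes F: "unram_ext_Q2 ord"
    and r: "bs \<noteq> []"
    and po: "pre_optimal ord bs"
  defines "B \<equiv> form_of bs"
    and "B1 \<equiv> form_of (butlast bs)"
    and "kr \<equiv> int (fst (last bs))"
    and "Cr \<equiv> snd (last bs)"
  shows
    "(dim_row Cr = 1 \<longrightarrow>
        (even (dim_row B1) \<longrightarrow>
            (odd (ord (det B1)) \<longrightarrow> DeltaB ord B - DeltaB ord B1 = kr + 2)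
          \<and> (even (ord (det B1)) \<and> xiB ord B1 = 0 \<longrightarrow> DeltaB ord B - DeltaB ord B1 = kr + 1)
          \<and> (xiB ord B1 \<noteq> 0 \<longrightarrow> DeltaB ord B - DeltaB ord B1 = kr))
      \<and> (odd (dim_row B1) \<longrightarrow>
            (odd (ord (det B)) \<longrightarrow> DeltaB ord B - DeltaB ord B1 = kr)
          \<and> (even (ord (det B)) \<and> xiB ord B = 0 \<longrightarrow> DeltaB ord B - DeltaB ord B1 = kr + 1)
          \<and> (xiB ord B \<noteq> 0 \<longrightarrow> DeltaB ord B - DeltaB ord B1 = kr + 2)))
   \<and> (dim_row Cr = 2 \<and> unimod_diag ord Cr \<longrightarrow> DeltaB ord B = DeltaB ord B1 + 2 * kr + 2)
   \<and> (half_even_unimod ord Cr \<longrightarrow> DeltaB ord B = DeltaB ord B1 + 2 * kr)"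
proof -
  interpret dyadic_field ord
    by (rule dyadic_field.intro[OF F])
  define k where "k = fst (last bs)"
  have bs: "bs = butlast bs @ [(k, Cr)]"
    using r by (simp add: k_def Cr_def)
  have B: "B = form_of (butlast bs @ [(k, Cr)])"
    unfolding B_def by (rule arg_cong[OF bs])
  have kr: "kr = int k"
    by (simp add: kr_def k_def)
  obtain n where B1: "B1 \<in> carrier_mat n n" "det B1 \<noteq> 0"
    using form_of_nondegenerate[of "butlast bs"] block_nondegenerate pre_optimal_blocks[OF po]
      in_set_butlastD unfolding B1_def by metis
  have Cr: "unimod_diag ord Cr \<or> half_even_unimod ord Cr"
    using pre_optimal_blocks[OF po, of "last bs"] r by (simp add: Cr_def)
  have unimod: "Cr \<in> carrier_mat m m \<and> det Cr \<noteq> 0 \<and> ord (det Cr) = 0"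
    if "dim_row Cr = m" "unimod_diag ord Cr" for m
    using unimod_diag_det[OF that(2)] that(1) by (metis carrier_matD(1))
  have rank_one: "unimod_diag ord Cr" if "dim_row Cr = 1"
    using Cr that by (auto simp: half_even_unimod_def)
  have xi: "even n \<Longrightarrow> xiB ord B1 = 0 \<and> xiB ord B = 0"
    if "dim_row Cr = 2" "unimod_diag ord Cr"
    using pre_optimal_last_rank_two_xiB[OF po r] that B1 unfolding B_def B1_def Cr_def by simp
  show ?thesis
    using DeltaB_snoc_rank_one[OF B1[unfolded B1_def], of Cr k, folded B1_def B]
      DeltaB_snoc_unimodular_rank_two[OF B1[unfolded B1_def], of Cr k, folded B1_def B]
      DeltaB_snoc_half_even_unimod[OF B1[unfolded B1_def], of Cr k, folded B1_def B]
      unimod rank_one xi B1 kr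
    by auto
qed

end
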